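(* For every $m\ge3$ there is a subgroup $G\subset\mathrm{Sp}_{2m}(\mathbb{F}_2)$ such that (a) no quadratic form of Arf invariant $0$ with polar form $\langle,\rangle$ is fixed by all elements of $G$, and (b) for every $g\in G$ there is a quadratic form of Arf invariant $0$ with polar form $\langle,\rangle$ fixed by $g$.
   Context: $\langle,\rangle$ is the standard alternating form on $\mathbb{F}_2^{\oplus2m}$ ($\langle e_i,e_j\rangle=\langle f_i,f_j\rangle=0$, $\langle e_i,f_j\rangle=\langle f_j,e_i\rangle=\delta_{ij}$), and $\mathrm{Sp}_{2m}(\mathbb{F}_2)$ its automorphism group. A quadratic form with polar form $\langle,\rangle$ is $Q$ with $Q(x+y)-Q(x)-Q(y)=\langle x,y\rangle$; $\mathrm{Sp}_{2m}(\mathbb{F}_2)$ acts by $(g\cdot Q)(x)=Q(g^{-1}x)$. The Arf invariant of $Q$ is $\sum_i Q(e_i)Q(f_i)$ for a symplectic basis, equivalently the $a$ with $\#\{x:Q(x)=a\}=2^{m-1}(2^m+1)$. *)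

theory Defs
  imports "HOL-Library.Z2" "HOL-Algebra.Bij"
begin

text \<open>Vectors of F_2^(2m): functions nat => bit vanishing outside {0..<2m}.
  Coordinate i < m is the coefficient of e_i, coordinate m+i that of f_i.\<close>

definition vecs :: "nat \<Rightarrow> (nat \<Rightarrow> bit) set" where
  "vecs m = {x. \<forall>i. 2 * m \<le> i \<longrightarrow> x i = 0}"

definition vadd :: "(nat \<Rightarrow> bit) \<Rightarrow> (nat \<Rightarrow> bit) \<Rightarrow> (nat \<Rightarrow> bit)" where
  "vadd x y = (\<lambda>i. x i + y i)"

definition sform :: "nat \<Rightarrow> (nat \<Rightarrow> bit) \<Rightarrow> (nat \<Rightarrow> bit) \<Rightarrow> bit" where
  "sform m x y = (\<Sum>i<m. x i * y (m + i) + x (m + i) * y i)"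

definition ebas :: "nat \<Rightarrow> nat \<Rightarrow> bit" where
  "ebas i = (\<lambda>j. if j = i then 1 else 0)"

definition fbas :: "nat \<Rightarrow> nat \<Rightarrow> nat \<Rightarrow> bit" where
  "fbas m i = (\<lambda>j. if j = m + i then 1 else 0)"

definition Sp :: "nat \<Rightarrow> ((nat \<Rightarrow> bit) \<Rightarrow> (nat \<Rightarrow> bit)) set" where
  "Sp m = {g \<in> Bij (vecs m).
     (\<forall>x\<in>vecs m. \<forall>y\<in>vecs m. g (vadd x y) = vadd (g x) (g y)) \<and>
     (\<forall>x\<in>vecs m. \<forall>y\<in>vecs m. sform m (g x) (g y) = sform m x y)}"

definition Sp_group :: "nat \<Rightarrow> ((nat \<Rightarrow> bit) \<Rightarrow> (nat \<Rightarrow> bit)) monoid" where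
  "Sp_group m = (BijGroup (vecs m)) \<lparr>carrier := Sp m\<rparr>"

definition quad_form :: "nat \<Rightarrow> ((nat \<Rightarrow> bit) \<Rightarrow> bit) \<Rightarrow> bool" where
  "quad_form m Q \<longleftrightarrow>
     (\<forall>x\<in>vecs m. \<forall>y\<in>vecs m. Q (vadd x y) - Q x - Q y = sform m x y)"

definition arf :: "nat \<Rightarrow> ((nat \<Rightarrow> bit) \<Rightarrow> bit) \<Rightarrow> bit" where
  "arf m Q = (\<Sum>i<m. Q (ebas i) * Q (fbas m i))"

definition fixes_form :: "nat \<Rightarrow> ((nat \<Rightarrow> bit) \<Rightarrow> (nat \<Rightarrow> bit)) \<Rightarrow> ((nat \<Rightarrow> bit) \<Rightarrow> bit) \<Rightarrow> bool" where
  "fixes_form m g Q \<longleftrightarrow> (\<forall>x\<in>vecs m. Q (inv_into (vecs m) g x) = Q x)"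

end

theory Submission
  imports Defs
begin

text \<open>
  The witness is the group of shears x -> x + S (x_{f_0}, x_{f_1}), with S a symmetric 2x2
  matrix over F_2 with values in span(e_0, e_1). A quadratic form Q fixed by the shears
  f_0 -> f_0 + e_0, f_1 -> f_1 + e_1 and f_0 -> f_0 + e_0 + e_1 satisfies
  Q(e_0) = Q(e_1) = Q(e_0 + e_1) = 1, by Q(x + y) = Q(x) + Q(y) + <x,y> with x = f_i;
  but Q(e_0 + e_1) = Q(e_0) + Q(e_1) + <e_0,e_1> = 0. Conversely each single shear fixes
  one of the forms sum_i x_{e_i} x_{f_i} + c_0 x_{e_0} + c_1 x_{e_1}, which vanish on every f_i
  and hence have Arf invariant 0.
\<close>

(* Keep + and * on bit as ring operations, so that algebra and algebra_simps apply. *)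
declare add_bit_eq_xor [simp del] mult_bit_eq_and [simp del]

lemma bit_add_self [simp]: "(a::bit) + a = 0"
  by (cases a) simp_all

lemma bit_add_eq_0_iff [simp]: "(a::bit) + b = 0 \<longleftrightarrow> a = b"
  by (cases a; cases b) simp_all

lemma bit_mult_self [simp]: "(a::bit) * a = a"
  by (cases a) simp_all

lemma vadd_in_vecs: "x \<in> vecs m \<Longrightarrow> y \<in> vecs m \<Longrightarrow> vadd x y \<in> vecs m"
  by (auto simp: vecs_def vadd_def)

lemma Sp_subgroup_BijGroup: "subgroup (Sp m) (BijGroup (vecs m))"
proof (rule subgroup.intro)
  show "Sp m \<subseteq> carrier (BijGroup (vecs m))"
    by (auto simp: Sp_def BijGroup_def)
  show "\<one>\<^bsub>BijGroup (vecs m)\<^esub> \<in> Sp m"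
    by (auto simp: Sp_def BijGroup_def id_Bij vadd_in_vecs)
  fix g h assume g: "g \<in> Sp m" and h: "h \<in> Sp m"
  have gB: "g \<in> Bij (vecs m)" and hB: "h \<in> Bij (vecs m)"
    using g h by (simp_all add: Sp_def)
  have h_in: "h x \<in> vecs m" if "x \<in> vecs m" for x
    using hB that Bij_imp_funcset by blast
  have "compose (vecs m) g h \<in> Sp m"
    using g h h_in compose_Bij[OF gB hB] by (simp add: Sp_def compose_def vadd_in_vecs)
  then show "g \<otimes>\<^bsub>BijGroup (vecs m)\<^esub> h \<in> Sp m"
    using gB hB by (simp add: BijGroup_def)
  let ?g' = "\<lambda>x\<in>vecs m. inv_into (vecs m) g x"
  have g'_vadd: "?g' (vadd x y) = vadd (?g' x) (?g' y)" if "x \<in> vecs m" "y \<in> vecs m" for x y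
    using that g Bij_inv_into_lemma[of "vecs m" g vadd] by (simp add: Sp_def vadd_in_vecs)
  have g'_sform: "sform m (?g' x) (?g' y) = sform m x y" if "x \<in> vecs m" "y \<in> vecs m" for x y
  proof -
    have "bij_betw g (vecs m) (vecs m)" using gB by (simp add: Bij_def)
    then have "g (?g' x) = x" "g (?g' y) = y"
      using that by (simp_all add: bij_betw_inv_into_right)
    moreover have "?g' x \<in> vecs m" "?g' y \<in> vecs m"
      using that gB by (simp_all add: Bij_inv_into_mem)
    moreover have "\<forall>x\<in>vecs m. \<forall>y\<in>vecs m. sform m (g x) (g y) = sform m x y"
      using g by (simp add: Sp_def)
    ultimately show ?thesis
      by (metis (no_types, lifting))
  qed
  show "inv\<^bsub>BijGroup (vecs m)\<^esub> g \<in> Sp m"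
    unfolding inv_BijGroup[OF gB] Sp_def
    using restrict_inv_into_Bij[OF gB] g'_vadd g'_sform by blast
qed

lemma fixes_form_iff:
  assumes "bij_betw g (vecs m) (vecs m)"
  shows "fixes_form m g Q \<longleftrightarrow> (\<forall>x\<in>vecs m. Q (g x) = Q x)"
proof
  assume fixed: "fixes_form m g Q"
  show "\<forall>x\<in>vecs m. Q (g x) = Q x"
  proof
    fix x assume x: "x \<in> vecs m"
    have "Q (inv_into (vecs m) g (g x)) = Q (g x)"
      using fixed bij_betw_apply[OF assms x] by (simp add: fixes_form_def)
    then show "Q (g x) = Q x"
      using bij_betw_inv_into_left[OF assms x] by simp
  qed
next
  assume inv: "\<forall>x\<in>vecs m. Q (g x) = Q x"
  show "fixes_form m g Q"
    unfolding fixes_form_def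
  proof
    fix x assume x: "x \<in> vecs m"
    have "inv_into (vecs m) g x \<in> vecs m"
      using bij_betw_apply[OF bij_betw_inv_into[OF assms] x] .
    then show "Q (inv_into (vecs m) g x) = Q x"
      using inv bij_betw_inv_into_right[OF assms x] by metis
  qed
qed

lemma quad_form_vadd:
  assumes "quad_form m Q" "x \<in> vecs m" "y \<in> vecs m"
  shows "Q (vadd x y) = Q x + Q y + sform m x y"
proof -
  have "Q (vadd x y) = Q x + Q y + (Q (vadd x y) - Q x - Q y)"
    by algebra
  with assms show ?thesis
    by (simp only: quad_form_def)
qed

lemma quad_form_vadd_eq_imp:
  assumes "quad_form m Q" "x \<in> vecs m" "y \<in> vecs m" "Q (vadd x y) = Q x"
  shows "Q y = sform m x y"
  using quad_form_vadd[OF assms(1-3)] assms(4) by (simp add: add.assoc[symmetric])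

lemma sum_lessThan_split_first_two:
  "2 \<le> (m::nat) \<Longrightarrow> (\<Sum>i<m. f i) = f 0 + f 1 + (\<Sum>i\<in>{2..<m}. f i)"
proof -
  assume "2 \<le> m"
  then have "{..<m} = insert 0 (insert 1 {2..<m})" by auto
  then show ?thesis by (simp add: add.assoc)
qed

(* The symplectic matrix [[1, S], [0, 1]] with S = [[s, t], [t, u]] acting on span(e_0, e_1, f_0, f_1);
   the symmetry of S is what makes it preserve the form. *)
definition shear :: "nat \<Rightarrow> bit \<Rightarrow> bit \<Rightarrow> bit \<Rightarrow> (nat \<Rightarrow> bit) \<Rightarrow> nat \<Rightarrow> bit" where
  "shear m s t u x =
     x(0 := x 0 + s * x m + t * x (m + 1), 1 := x 1 + t * x m + u * x (m + 1))"

lemma shear_apply_ge2: "2 \<le> i \<Longrightarrow> shear m s t u x i = x i"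
  by (simp add: shear_def)

lemma shear_in_vecs: "2 \<le> m \<Longrightarrow> x \<in> vecs m \<Longrightarrow> shear m s t u x \<in> vecs m"
  by (auto simp: vecs_def shear_def)

lemma shear_shear:
  "2 \<le> m \<Longrightarrow> shear m s t u (shear m s' t' u' x) = shear m (s + s') (t + t') (u + u') x"
  by (rule ext) (simp add: shear_def algebra_simps)

lemma shear_zero: "shear m 0 0 0 = (\<lambda>x. x)"
  by (intro ext) (simp add: shear_def)

lemma shear_involution: "2 \<le> m \<Longrightarrow> shear m s t u (shear m s t u x) = x"
  by (simp add: shear_shear shear_zero)

lemma shear_vadd: "shear m s t u (vadd x y) = vadd (shear m s t u x) (shear m s t u y)"
  by (rule ext) (simp add: shear_def vadd_def algebra_simps)

lemma sform_shear: "2 \<le> m \<Longrightarrow> sform m (shear m s t u x) (shear m s t u y) = sform m x y"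
proof -
  assume m: "2 \<le> m"
  let ?a = "x m" and ?b = "x (m + 1)" and ?a' = "y m" and ?b' = "y (m + 1)"
  have "(x 0 + s * ?a + t * ?b) * ?a' + ?a * (y 0 + s * ?a' + t * ?b')
      + ((x 1 + t * ?a + u * ?b) * ?b' + ?b * (y 1 + t * ?a' + u * ?b'))
      = x 0 * ?a' + ?a * y 0 + (x 1 * ?b' + ?b * y 1)
        + 2 * (s * ?a * ?a' + t * ?b * ?a' + t * ?a * ?b' + u * ?b * ?b')"
    by algebra
  then show ?thesis
    using m unfolding sform_def
    by (simp add: sum_lessThan_split_first_two shear_apply_ge2 add.assoc)
       (simp add: shear_def add.assoc)
qed

definition shear_perm :: "nat \<Rightarrow> bit \<Rightarrow> bit \<Rightarrow> bit \<Rightarrow> (nat \<Rightarrow> bit) \<Rightarrow> nat \<Rightarrow> bit" where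
  "shear_perm m s t u = restrict (shear m s t u) (vecs m)"

definition shear_group :: "nat \<Rightarrow> ((nat \<Rightarrow> bit) \<Rightarrow> nat \<Rightarrow> bit) set" where
  "shear_group m = {shear_perm m s t u | s t u. True}"

lemma shear_perm_Bij: "2 \<le> m \<Longrightarrow> shear_perm m s t u \<in> Bij (vecs m)"
proof -
  assume m: "2 \<le> m"
  have "bij_betw (shear m s t u) (vecs m) (vecs m)"
    by (rule bij_betw_byWitness[where f' = "shear m s t u"])
       (auto simp: m shear_involution shear_in_vecs)
  then show ?thesis
    by (simp add: Bij_def shear_perm_def)
qed

lemma shear_perm_Sp: "2 \<le> m \<Longrightarrow> shear_perm m s t u \<in> Sp m"
  using shear_perm_Bij[of m s t u]
  by (simp add: Sp_def shear_perm_def vadd_in_vecs shear_vadd sform_shear shear_in_vecs)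

lemma shear_perm_mult:
  "2 \<le> m \<Longrightarrow> shear_perm m s t u \<otimes>\<^bsub>BijGroup (vecs m)\<^esub> shear_perm m s' t' u'
    = shear_perm m (s + s') (t + t') (u + u')"
  by (simp add: BijGroup_def shear_perm_Bij)
     (auto simp: compose_def shear_perm_def shear_in_vecs shear_shear)

lemma shear_perm_one: "\<one>\<^bsub>BijGroup (vecs m)\<^esub> = shear_perm m 0 0 0"
  by (simp add: BijGroup_def shear_perm_def shear_zero)

lemma shear_group_subgroup_BijGroup: "2 \<le> m \<Longrightarrow> subgroup (shear_group m) (BijGroup (vecs m))"
proof -
  assume m: "2 \<le> m"
  interpret B: group "BijGroup (vecs m)" by (rule group_BijGroup)
  have carrier_B: "carrier (BijGroup (vecs m)) = Bij (vecs m)"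
    by (simp add: BijGroup_def)
  have inv_shear: "inv\<^bsub>BijGroup (vecs m)\<^esub> shear_perm m s t u = shear_perm m s t u" for s t u
    by (rule B.inv_equality) (simp_all add: m shear_perm_mult shear_perm_one carrier_B shear_perm_Bij)
  show ?thesis
  proof (rule B.subgroupI)
    show "shear_group m \<subseteq> carrier (BijGroup (vecs m))"
      by (auto simp: shear_group_def carrier_B m shear_perm_Bij)
    show "shear_group m \<noteq> {}"
      by (auto simp: shear_group_def)
    show "inv\<^bsub>BijGroup (vecs m)\<^esub> g \<in> shear_group m" if "g \<in> shear_group m" for g
      using that by (fastforce simp: shear_group_def inv_shear)
    show "g \<otimes>\<^bsub>BijGroup (vecs m)\<^esub> h \<in> shear_group m"
      if "g \<in> shear_group m" "h \<in> shear_group m" for g h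
      using that by (fastforce simp: shear_group_def m shear_perm_mult)
  qed
qed

lemma shear_group_subgroup: "2 \<le> m \<Longrightarrow> subgroup (shear_group m) (Sp_group m)"
  unfolding Sp_group_def
  by (rule group.subgroup_incl[OF group_BijGroup shear_group_subgroup_BijGroup Sp_subgroup_BijGroup])
     (auto simp: shear_group_def shear_perm_Sp)

lemma shear_perm_fixes_form_iff:
  "2 \<le> m \<Longrightarrow> fixes_form m (shear_perm m s t u) Q \<longleftrightarrow> (\<forall>x\<in>vecs m. Q (shear m s t u x) = Q x)"
  using shear_perm_Bij[of m s t u] fixes_form_iff[of "shear_perm m s t u" m Q]
  by (simp add: Bij_def shear_perm_def)

lemma no_quad_form_fixed_by_shear_group:
  assumes m: "2 \<le> m" and Q: "quad_form m Q"
    and fixed: "\<forall>g\<in>shear_group m. fixes_form m g Q"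
  shows False
proof -
  have Q_shear: "Q (shear m s t u x) = Q x" if "x \<in> vecs m" for s t u x
  proof -
    have "fixes_form m (shear_perm m s t u) Q"
      using fixed by (auto simp: shear_group_def)
    then show ?thesis
      using that by (simp add: shear_perm_fixes_form_iff[OF m])
  qed
  have vecs: "ebas 0 \<in> vecs m" "ebas 1 \<in> vecs m" "fbas m 0 \<in> vecs m" "fbas m 1 \<in> vecs m"
    using m by (auto simp: vecs_def ebas_def fbas_def)
  then have e01: "vadd (ebas 0) (ebas 1) \<in> vecs m"
    by (simp add: vadd_in_vecs)
  have "shear m 1 0 0 (fbas m 0) = vadd (fbas m 0) (ebas 0)"
    "shear m 0 0 1 (fbas m 1) = vadd (fbas m 1) (ebas 1)"
    "shear m 1 1 0 (fbas m 0) = vadd (fbas m 0) (vadd (ebas 0) (ebas 1))"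
    using m by (auto simp: shear_def fbas_def ebas_def vadd_def)
  then have "Q (vadd (fbas m 0) (ebas 0)) = Q (fbas m 0)"
    "Q (vadd (fbas m 1) (ebas 1)) = Q (fbas m 1)"
    "Q (vadd (fbas m 0) (vadd (ebas 0) (ebas 1))) = Q (fbas m 0)"
    using Q_shear vecs by metis+
  then have "Q (ebas 0) = sform m (fbas m 0) (ebas 0)"
    "Q (ebas 1) = sform m (fbas m 1) (ebas 1)"
    "Q (vadd (ebas 0) (ebas 1)) = sform m (fbas m 0) (vadd (ebas 0) (ebas 1))"
    using quad_form_vadd_eq_imp[OF Q] vecs e01 by blast+
  moreover have "Q (vadd (ebas 0) (ebas 1)) = Q (ebas 0) + Q (ebas 1) + sform m (ebas 0) (ebas 1)"
    using quad_form_vadd[OF Q vecs(1,2)] .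
  ultimately show False
    using m by (simp add: sform_def sum_lessThan_split_first_two fbas_def ebas_def vadd_def)
qed

(* Q_0 + <c_0 f_0 + c_1 f_1, -> for the split form Q_0(x) = sum_i x_{e_i} x_{f_i}. *)
definition std_qform :: "nat \<Rightarrow> bit \<Rightarrow> bit \<Rightarrow> (nat \<Rightarrow> bit) \<Rightarrow> bit" where
  "std_qform m c0 c1 x = (\<Sum>i<m. x i * x (m + i)) + c0 * x 0 + c1 * x 1"

lemma quad_form_std_qform: "quad_form m (std_qform m c0 c1)"
  unfolding quad_form_def
proof (intro ballI)
  fix x y :: "nat \<Rightarrow> bit"
  have "(\<Sum>i<m. (x i + y i) * (x (m + i) + y (m + i)))
      = (\<Sum>i<m. x i * x (m + i)) + (\<Sum>i<m. y i * y (m + i)) + sform m x y"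
    unfolding sform_def sum.distrib[symmetric] by (rule sum.cong) (simp_all add: algebra_simps)
  then show "std_qform m c0 c1 (vadd x y) - std_qform m c0 c1 x - std_qform m c0 c1 y = sform m x y"
    by (simp add: std_qform_def vadd_def algebra_simps)
qed

lemma arf_std_qform: "2 \<le> m \<Longrightarrow> arf m (std_qform m c0 c1) = 0"
  unfolding arf_def std_qform_def by (intro sum.neutral) (auto simp: fbas_def)

lemma std_qform_shear:
  assumes m: "2 \<le> m" and c: "s * (1 + c0) = t * c1" "u * (1 + c1) = t * c0"
  shows "std_qform m c0 c1 (shear m s t u x) = std_qform m c0 c1 x"
proof -
  let ?a = "x m" and ?b = "x (m + 1)"
  have "(x 0 + s * ?a + t * ?b) * ?a + (x 1 + t * ?a + u * ?b) * ?b
        + c0 * (x 0 + s * ?a + t * ?b) + c1 * (x 1 + t * ?a + u * ?b)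
      = x 0 * ?a + x 1 * ?b + c0 * x 0 + c1 * x 1
        + (?a * ?a - ?a) * s + (?b * ?b - ?b) * u
        + ?a * (s * (1 + c0) - t * c1) + ?b * (u * (1 + c1) - t * c0)
        + 2 * (t * ?a * ?b + t * c1 * ?a + t * c0 * ?b)"
    by algebra
  then show ?thesis
    using m c unfolding std_qform_def
    by (simp add: sum_lessThan_split_first_two shear_apply_ge2 add.assoc)
       (simp add: shear_def add.assoc)
qed

lemma shear_invariant_coeffs_exist: "\<exists>c0 c1 :: bit. s * (1 + c0) = t * c1 \<and> u * (1 + c1) = t * c0"
  by (cases s; cases t; cases u) (auto intro: exI[of _ 0] exI[of _ 1])

lemma shear_perm_fixes_arf0_form:
  assumes m: "2 \<le> m"
  shows "\<exists>Q. quad_form m Q \<and> arf m Q = 0 \<and> fixes_form m (shear_perm m s t u) Q"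
proof -
  obtain c0 c1 where "s * (1 + c0) = t * c1" "u * (1 + c1) = t * c0"
    using shear_invariant_coeffs_exist by blast
  then have "fixes_form m (shear_perm m s t u) (std_qform m c0 c1)"
    by (simp add: shear_perm_fixes_form_iff[OF m] std_qform_shear[OF m])
  then show ?thesis
    using quad_form_std_qform arf_std_qform[OF m] by blast
qed

theorem mainTheorem11:
  fixes m :: nat
  assumes "m \<ge> 3"
  shows "\<exists>G. subgroup G (Sp_group m) \<and>
    \<not> (\<exists>Q. quad_form m Q \<and> arf m Q = 0 \<and> (\<forall>g\<in>G. fixes_form m g Q)) \<and>
    (\<forall>g\<in>G. \<exists>Q. quad_form m Q \<and> arf m Q = 0 \<and> fixes_form m g Q)"
proof (intro exI conjI)
  have m: "2 \<le> m" using assms by simp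
  show "subgroup (shear_group m) (Sp_group m)"
    using shear_group_subgroup[OF m] .
  show "\<not> (\<exists>Q. quad_form m Q \<and> arf m Q = 0 \<and> (\<forall>g\<in>shear_group m. fixes_form m g Q))"
    using no_quad_form_fixed_by_shear_group[OF m] by blast
  show "\<forall>g\<in>shear_group m. \<exists>Q. quad_form m Q \<and> arf m Q = 0 \<and> fixes_form m g Q"
    using shear_perm_fixes_arf0_form[OF m] by (auto simp: shear_group_def)
qed

end
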